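(* Let $\mathbf{F}$ and $\mathbf{E}$ be normed spaces of functions over a set $X$ and let $T:\mathbf{F}\to\mathbf{E}$ be a bounded linear operator. The following are equivalent: (i) there is $\omega:X\to\mathbb{C}$ such that $Tf=\omega f$ for all $f\in\mathbf{F}$; (ii) $T\mathbf{F}_Y\subset\mathbf{E}_Y$ for every $Y\subset X$; (iii) $T\mathbf{F}_{X\setminus\{x\}}\subset\mathbf{E}_{X\setminus\{x\}}$ for every $x\in X$; (iv) $T^*x_{\mathbf{E}}\in\mathbb{C}x_{\mathbf{F}}$ for every $x\in X$.
   Context: A normed space of functions (NSF) over a set $X$ is a linear subspace of the space of all functions $X\to\mathbb{C}$ with a norm for which every point evaluation $x_{\mathbf{F}}:f\mapsto f(x)$ is a bounded functional. For $Y\subset X$, $\mathbf{F}_Y=\{f\in\mathbf{F}:\ f(x)=0\text{ for all }x\in X\setminus Y\}$. *)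

theory Defs
  imports Complex_Main
begin

definition nsf :: "('x \<Rightarrow> complex) set \<Rightarrow> (('x \<Rightarrow> complex) \<Rightarrow> real) \<Rightarrow> bool" where
  "nsf F N \<longleftrightarrow>
     (\<lambda>_. 0) \<in> F \<and>
     (\<forall>f\<in>F. \<forall>g\<in>F. (\<lambda>x. f x + g x) \<in> F) \<and>
     (\<forall>c. \<forall>f\<in>F. (\<lambda>x. c * f x) \<in> F) \<and>
     (\<forall>f\<in>F. 0 \<le> N f) \<and>
     (\<forall>f\<in>F. N f = 0 \<longleftrightarrow> f = (\<lambda>_. 0)) \<and>
     (\<forall>f\<in>F. \<forall>g\<in>F. N (\<lambda>x. f x + g x) \<le> N f + N g) \<and>
     (\<forall>c. \<forall>f\<in>F. N (\<lambda>x. c * f x) = cmod c * N f) \<and>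
     (\<forall>x. \<exists>C. \<forall>f\<in>F. cmod (f x) \<le> C * N f)"

definition point_eval :: "'x \<Rightarrow> ('x \<Rightarrow> complex) \<Rightarrow> complex" where
  "point_eval x = (\<lambda>f. f x)"

definition bounded_lin_op ::
  "('x \<Rightarrow> complex) set \<Rightarrow> (('x \<Rightarrow> complex) \<Rightarrow> real) \<Rightarrow>
   ('x \<Rightarrow> complex) set \<Rightarrow> (('x \<Rightarrow> complex) \<Rightarrow> real) \<Rightarrow>
   (('x \<Rightarrow> complex) \<Rightarrow> ('x \<Rightarrow> complex)) \<Rightarrow> bool" where
  "bounded_lin_op F NF E NE T \<longleftrightarrow>
     (\<forall>f\<in>F. T f \<in> E) \<and>
     (\<forall>f\<in>F. \<forall>g\<in>F. T (\<lambda>x. f x + g x) = (\<lambda>x. T f x + T g x)) \<and>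
     (\<forall>c. \<forall>f\<in>F. T (\<lambda>x. c * f x) = (\<lambda>x. c * T f x)) \<and>
     (\<exists>C. \<forall>f\<in>F. NE (T f) \<le> C * NF f)"

definition restr_sp :: "('x \<Rightarrow> complex) set \<Rightarrow> 'x set \<Rightarrow> ('x \<Rightarrow> complex) set" where
  "restr_sp F Y = {f \<in> F. \<forall>x. x \<notin> Y \<longrightarrow> f x = 0}"

text \<open>Adjoint action on functionals (functionals on E are restricted to E by
  composition, so T^* phi = phi o T as a functional on F).\<close>
definition adj :: "(('x \<Rightarrow> complex) \<Rightarrow> ('x \<Rightarrow> complex)) \<Rightarrow>
   (('x \<Rightarrow> complex) \<Rightarrow> complex) \<Rightarrow> (('x \<Rightarrow> complex) \<Rightarrow> complex)" where
  "adj T \<phi> = \<phi> \<circ> T"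

end

theory Submission
  imports Defs
begin

text \<open>Condition (iii) says that the
  functional \<open>f \<mapsto> (T f) x\<close> vanishes on the kernel of the point evaluation \<open>f \<mapsto> f x\<close>;
  a linear functional vanishing on the kernel of another one is a scalar multiple of it,
  which is (iv), and choosing the scalar at every point \<open>x\<close> yields the multiplier \<open>\<omega>\<close>
  of (i).\<close>

lemma adj_point_eval [simp]: "adj T (point_eval x) f = T f x"
  by (simp add: adj_def point_eval_def)

lemma nsf_lin_comb:
  assumes "nsf F N" "f \<in> F" "g \<in> F"
  shows "(\<lambda>y. a * f y + b * g y) \<in> F"
proof -
  have add: "\<forall>f\<in>F. \<forall>g\<in>F. (\<lambda>x. f x + g x) \<in> F"
    and scale: "\<forall>c. \<forall>f\<in>F. (\<lambda>x. c * f x) \<in> F"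
    using assms(1) unfolding nsf_def by blast+
  show ?thesis
    using add[rule_format, OF scale[rule_format, OF assms(2)] scale[rule_format, OF assms(3)]] .
qed

lemma bounded_lin_op_lin_comb:
  assumes "nsf F NF" "bounded_lin_op F NF E NE T" "f \<in> F" "g \<in> F"
  shows "T (\<lambda>y. a * f y + b * g y) = (\<lambda>y. a * T f y + b * T g y)"
proof -
  have "(\<lambda>y. a * f y) \<in> F" "(\<lambda>y. b * g y) \<in> F"
    using assms(1,3,4) unfolding nsf_def by blast+
  then show ?thesis
    using assms(2-4) unfolding bounded_lin_op_def by simp
qed

lemma multiplier_preserves_restr_sp:
  assumes "\<And>f. f \<in> F \<Longrightarrow> T f \<in> E" "\<forall>f\<in>F. T f = (\<lambda>x. \<omega> x * f x)"
  shows "T ` restr_sp F Y \<subseteq> restr_sp E Y"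
  using assms unfolding restr_sp_def by auto

lemma vanishing_preserved_if_restr_sp_preserved:
  assumes "T ` restr_sp F (UNIV - {x}) \<subseteq> restr_sp E (UNIV - {x})" "f \<in> F" "f x = 0"
  shows "T f x = 0"
proof -
  have "f \<in> restr_sp F (UNIV - {x})"
    using assms(2,3) unfolding restr_sp_def by auto
  then have "T f \<in> restr_sp E (UNIV - {x})"
    using assms(1) by blast
  then show ?thesis
    unfolding restr_sp_def by auto
qed

lemma point_multiplier_if_vanishing_preserved:
  fixes F :: "('x \<Rightarrow> 'a::field) set" and T :: "('x \<Rightarrow> 'a) \<Rightarrow> ('x \<Rightarrow> 'a)"
  assumes closed: "\<And>f g a b. f \<in> F \<Longrightarrow> g \<in> F \<Longrightarrow> (\<lambda>y. a * f y + b * g y) \<in> F"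
    and linear: "\<And>f g a b. f \<in> F \<Longrightarrow> g \<in> F \<Longrightarrow>
      T (\<lambda>y. a * f y + b * g y) = (\<lambda>y. a * T f y + b * T g y)"
    and vanishing: "\<And>f. f \<in> F \<Longrightarrow> f x = 0 \<Longrightarrow> T f x = 0"
  shows "\<exists>c. \<forall>f\<in>F. T f x = c * f x"
proof (cases "\<exists>f\<^sub>0\<in>F. f\<^sub>0 x \<noteq> 0")
  case True
  then obtain f\<^sub>0 where f\<^sub>0: "f\<^sub>0 \<in> F" "f\<^sub>0 x \<noteq> 0" by blast
  have "T f x = (T f\<^sub>0 x / f\<^sub>0 x) * f x" if "f \<in> F" for f
  proof -
    let ?h = "\<lambda>y. f\<^sub>0 x * f y + (- f x) * f\<^sub>0 y"
    have "?h x = 0"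
      by (simp add: mult.commute)
    then have "T ?h x = 0"
      using vanishing[OF closed[OF \<open>f \<in> F\<close> f\<^sub>0(1)]] by blast
    moreover have "T ?h x = f\<^sub>0 x * T f x + (- f x) * T f\<^sub>0 x"
      by (simp only: linear[OF \<open>f \<in> F\<close> f\<^sub>0(1)])
    ultimately have "f\<^sub>0 x * T f x = f x * T f\<^sub>0 x"
      by simp
    then show ?thesis
      using f\<^sub>0(2) by (simp add: field_simps)
  qed
  then show ?thesis by blast
next
  case False
  then show ?thesis
    using vanishing by (intro exI[of _ 0]) auto
qed

theorem proposition2p4:
  fixes F E :: "('x \<Rightarrow> complex) set"
    and NF NE :: "('x \<Rightarrow> complex) \<Rightarrow> real"
    and T :: "('x \<Rightarrow> complex) \<Rightarrow> ('x \<Rightarrow> complex)"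
  assumes "nsf F NF" and "nsf E NE" and "bounded_lin_op F NF E NE T"
  shows "((\<exists>\<omega>::'x \<Rightarrow> complex. \<forall>f\<in>F. T f = (\<lambda>x. \<omega> x * f x))
            \<longleftrightarrow> (\<forall>Y. T ` restr_sp F Y \<subseteq> restr_sp E Y))
       \<and> ((\<forall>Y. T ` restr_sp F Y \<subseteq> restr_sp E Y)
            \<longleftrightarrow> (\<forall>x. T ` restr_sp F (UNIV - {x}) \<subseteq> restr_sp E (UNIV - {x})))
       \<and> ((\<forall>x. T ` restr_sp F (UNIV - {x}) \<subseteq> restr_sp E (UNIV - {x}))
            \<longleftrightarrow> (\<forall>x. \<exists>c::complex. \<forall>f\<in>F. adj T (point_eval x) f = c * point_eval x f))"
proof -
  let ?i = "\<exists>\<omega>. \<forall>f\<in>F. T f = (\<lambda>x. \<omega> x * f x)"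
  let ?ii = "\<forall>Y. T ` restr_sp F Y \<subseteq> restr_sp E Y"
  let ?iii = "\<forall>x. T ` restr_sp F (UNIV - {x}) \<subseteq> restr_sp E (UNIV - {x})"
  let ?iv = "\<forall>x. \<exists>c. \<forall>f\<in>F. T f x = c * f x"
  have cycle: "(A \<Longrightarrow> B) \<Longrightarrow> (B \<Longrightarrow> C) \<Longrightarrow> (C \<Longrightarrow> D) \<Longrightarrow> (D \<Longrightarrow> A) \<Longrightarrow>
      (A \<longleftrightarrow> B) \<and> (B \<longleftrightarrow> C) \<and> (C \<longleftrightarrow> D)" for A B C D
    by blast
  have T_into_E: "\<And>f. f \<in> F \<Longrightarrow> T f \<in> E"
    using assms(3) unfolding bounded_lin_op_def by blast
  have "?i \<Longrightarrow> ?ii"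
    using multiplier_preserves_restr_sp[OF T_into_E] by (elim exE) (rule allI)
  moreover have "?ii \<Longrightarrow> ?iii"
    by blast
  moreover have "?iii \<Longrightarrow> ?iv"
  proof (intro allI)
    fix x
    assume ?iii
    then have "T ` restr_sp F (UNIV - {x}) \<subseteq> restr_sp E (UNIV - {x})" ..
    then show "\<exists>c. \<forall>f\<in>F. T f x = c * f x"
      using vanishing_preserved_if_restr_sp_preserved
      by (intro point_multiplier_if_vanishing_preserved[OF
          nsf_lin_comb[OF assms(1)] bounded_lin_op_lin_comb[OF assms(1,3)]])
  qed
  moreover have "?iv \<Longrightarrow> ?i"
  proof -
    assume ?iv
    then obtain \<omega> where "\<And>x f. f \<in> F \<Longrightarrow> T f x = \<omega> x * f x" by metis
    then show ?i by auto
  qed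
  ultimately show ?thesis
    unfolding adj_point_eval unfolding point_eval_def by (rule cycle)
qed

end
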